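(* Let $\mathcal{M}=(E,\mathcal{C})$ be a loopless oriented matroid with $E=\{e_1,\dots,e_m\}$ ordered $e_1\prec\cdots\prec e_m$, and let $1\le k\le m$. For every $(N_{k-1},A_{k-1})\in\mathscr{N}_{k-1}$, the pair $\psi_k(N_{k-1},A_{k-1})$ belongs to $\mathscr{N}_k$; i.e. $\psi_k:\mathscr{N}_{k-1}\to\mathscr{N}_k$ is well-defined.
   Context: A signed subset of a finite set $E$ is a pair $X=(X^+,X^-)$ of disjoint subsets; support $\underline{X}=X^+\cup X^-$, $-X=(X^-,X^+)$. An oriented matroid $\mathcal{M}=(E,\mathcal{C})$: a collection $\mathcal{C}$ of signed subsets with (C1) empty signed set not in $\mathcal{C}$; (C2) $\mathcal{C}=-\mathcal{C}$; (C3) $\underline{X}\subseteq\underline{Y}$ for $X,Y\in\mathcal{C}$ implies $X=\pm Y$; (C4) for $X,Y\in\mathcal{C}$, $X\neq\pm Y$, $e\in X^+\cap Y^-$ there is $Z\in\mathcal{C}$ with $Z^+\subseteq X^+\cup Y^+-\{e\}$, $Z^-\subseteq X^-\cup Y^--\{e\}$. Underlying matroid $\underline{\mathcal{M}}$: circuits $\underline{X}$, $X\in\mathcal{C}$; loopless means no one-element circuit. Positive circuit: $X^-=\emptyset$; acyclic: no positive circuit. Reorientation ${}_{-A}\mathcal{M}$ ($A\subseteq E$): signed circuits ${}_{-A}X=((X^+-A)\cup(X^-\cap A),(X^--A)\cup(X^+\cap A))$; ${}_{-e}={}_{-\{e\}}$. Deletion $\mathcal{M}\backslash X$ on $E-X$: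 signed circuits $Y\in\mathcal{C}$ with $\underline{Y}\subseteq E-X$. Contraction $\mathcal{M}/X$ on $E-X$: support-minimal nonempty members of $\{(Y^+-X,Y^--X):Y\in\mathcal{C},\underline{Y}-X\ne\emptyset\}$. Broken circuit: circuit of $\underline{\mathcal{M}}$ minus its $\prec$-maximal element; $\mathrm{NBC}(\underline{\mathcal{M}})$: subsets of $E$ containing no broken circuit. $E_k=\{e_1,\dots,e_k\}$; for $N_k\subseteq E_k$, $N_k^c=E_k-N_k$. $\mathscr{N}_k$ is the set of pairs $(N_k,A_k)$ with $N_k\subseteq E_k$, $A_k\subseteq E-E_k$, $N_k\in\mathrm{NBC}(\underline{\mathcal{M}})$, and $\mathcal{M}_k:={}_{-A_k}(\mathcal{M}\backslash N_k^c/N_k)$ acyclic. For $(N_{k-1},A_{k-1})\in\mathscr{N}_{k-1}$ with $\mathcal{M}_{k-1}={}_{-A_{k-1}}(\mathcal{M}\backslash N_{k-1}^c/N_{k-1})$: $\psi_k(N_{k-1},A_{k-1})=(N_{k-1}\cup\{e_k\},A_{k-1})$ if $e_k\notin A_{k-1}$ and ${}_{-e_k}\mathcal{M}_{k-1}$ is acyclic; $=(N_{k-1},A_{k-1})$ if $e_k\notin A_{k-1}$ and ${}_{-e_k}\mathcal{M}_{k-1}$ is not acyclic; $=(N_{k-1},A_{k-1}-\{e_k\})$ if $e_k\in A_{k-1}$. *)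

theory Defs
  imports Main
begin

text \<open>Signed subsets are pairs (X+, X-) of sets.\<close>
type_synonym 'a sset = "'a set \<times> 'a set"

definition supp :: "'a sset \<Rightarrow> 'a set" where
  "supp X = fst X \<union> snd X"

definition sneg :: "'a sset \<Rightarrow> 'a sset" where
  "sneg X = (snd X, fst X)"

definition signed_subset :: "'a set \<Rightarrow> 'a sset \<Rightarrow> bool" where
  "signed_subset E X \<longleftrightarrow> fst X \<inter> snd X = {} \<and> supp X \<subseteq> E"

definition oriented_matroid :: "'a set \<Rightarrow> 'a sset set \<Rightarrow> bool" where
  "oriented_matroid E C \<longleftrightarrow>
     finite E \<and> (\<forall>X\<in>C. signed_subset E X) \<and>
     ({}, {}) \<notin> C \<and>
     (\<forall>X\<in>C. sneg X \<in> C) \<and>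
     (\<forall>X\<in>C. \<forall>Y\<in>C. supp X \<subseteq> supp Y \<longrightarrow> X = Y \<or> X = sneg Y) \<and>
     (\<forall>X\<in>C. \<forall>Y\<in>C. \<forall>e. X \<noteq> Y \<and> X \<noteq> sneg Y \<and> e \<in> fst X \<inter> snd Y \<longrightarrow>
        (\<exists>Z\<in>C. fst Z \<subseteq> fst X \<union> fst Y - {e} \<and> snd Z \<subseteq> snd X \<union> snd Y - {e}))"

definition circuits :: "'a sset set \<Rightarrow> 'a set set" where
  "circuits C = supp ` C"

definition loopless :: "'a sset set \<Rightarrow> bool" where
  "loopless C \<longleftrightarrow> (\<forall>X\<in>C. card (supp X) \<noteq> 1)"

definition acyclic_om :: "'a sset set \<Rightarrow> bool" where
  "acyclic_om C \<longleftrightarrow> \<not> (\<exists>X\<in>C. snd X = {})"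

definition reorient_set :: "'a set \<Rightarrow> 'a sset \<Rightarrow> 'a sset" where
  "reorient_set A X = ((fst X - A) \<union> (snd X \<inter> A), (snd X - A) \<union> (fst X \<inter> A))"

definition reorient :: "'a set \<Rightarrow> 'a sset set \<Rightarrow> 'a sset set" where
  "reorient A C = reorient_set A ` C"

definition deletion :: "'a set \<Rightarrow> 'a sset set \<Rightarrow> 'a set \<Rightarrow> 'a sset set" where
  "deletion E C X = {Y \<in> C. supp Y \<subseteq> E - X}"

definition contraction :: "'a sset set \<Rightarrow> 'a set \<Rightarrow> 'a sset set" where
  "contraction C X =
     (let S = {(fst Y - X, snd Y - X) | Y. Y \<in> C \<and> supp Y - X \<noteq> {}}
      in {Z \<in> S. \<not> (\<exists>Z'\<in>S. supp Z' \<subset> supp Z)})"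

definition pos :: "'a list \<Rightarrow> 'a \<Rightarrow> nat" where
  "pos es x = (LEAST i. i < length es \<and> es ! i = x)"

text \<open>The order e_1 < ... < e_m is given by position in the distinct list es.\<close>
definition broken_circuit :: "'a list \<Rightarrow> 'a sset set \<Rightarrow> 'a set \<Rightarrow> bool" where
  "broken_circuit es C B \<longleftrightarrow>
     (\<exists>c\<in>circuits C. \<exists>e\<in>c. (\<forall>x\<in>c. pos es x \<le> pos es e) \<and> B = c - {e})"

definition NBC :: "'a list \<Rightarrow> 'a sset set \<Rightarrow> 'a set set" where
  "NBC es C = {N. N \<subseteq> set es \<and> \<not> (\<exists>B. broken_circuit es C B \<and> B \<subseteq> N)}"

text \<open>E_k = {e_1,...,e_k}, e_k = es ! (k-1).\<close>
definition Ek :: "'a list \<Rightarrow> nat \<Rightarrow> 'a set" where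
  "Ek es k = set (take k es)"

definition Mk :: "'a list \<Rightarrow> 'a sset set \<Rightarrow> nat \<Rightarrow> 'a set \<Rightarrow> 'a set \<Rightarrow> 'a sset set" where
  "Mk es C k N A = reorient A (contraction (deletion (set es) C (Ek es k - N)) N)"

definition Nscr :: "'a list \<Rightarrow> 'a sset set \<Rightarrow> nat \<Rightarrow> ('a set \<times> 'a set) set" where
  "Nscr es C k = {(N, A). N \<subseteq> Ek es k \<and> A \<subseteq> set es - Ek es k \<and>
        N \<in> NBC es C \<and> acyclic_om (Mk es C k N A)}"

definition psi :: "'a list \<Rightarrow> 'a sset set \<Rightarrow> nat \<Rightarrow> 'a set \<times> 'a set \<Rightarrow> 'a set \<times> 'a set" where
  "psi es C k NA = (let N = fst NA; A = snd NA; e = es ! (k - 1) in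
     if e \<notin> A then
       (if acyclic_om (reorient {e} (Mk es C (k - 1) N A)) then (N \<union> {e}, A) else (N, A))
     else (N, A - {e}))"

end

theory Submission
  imports Defs
begin

text \<open>
  Reorientation preserves the circuit axioms and commutes with deletion and contraction. Hence,
  when N contains no circuit, \<open>reorient A (M \ D / N)\<close> is acyclic iff every signed circuit
  of M avoiding D has, after reorientation by A, a negative element outside N: a circuit of M
  that is positive outside N can be shrunk by circuit elimination until its restriction to
  \<open>E - N\<close> is support-minimal, i.e. a positive circuit of the contraction.

  With this criterion the cases of \<open>\<psi>\<^sub>k\<close> become comparisons of families of circuits. In the
  only nontrivial case, \<open>e\<^sub>k\<close> joins N because both \<open>M\<^sub>k\<^sub>-\<^sub>1\<close> and its reorientation at \<open>e\<^sub>k\<close> are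
  acyclic; then no circuit avoiding \<open>D = E\<^sub>k\<^sub>-\<^sub>1 - N\<close> has, reoriented by A, its negative part
  inside \<open>N \<union> {e\<^sub>k}\<close>. This gives acyclicity of \<open>M\<^sub>k\<close>, and also excludes a broken circuit
  \<open>c - {m}\<close> inside \<open>N \<union> {e\<^sub>k}\<close>: such c avoids D since \<open>m \<succ> e\<^sub>k\<close>, and one of its two
  orientations has m positive.
\<close>

lemma oriented_matroid_signed_subset:
  assumes "oriented_matroid E C" "X \<in> C"
  shows "fst X \<inter> snd X = {}" "supp X \<subseteq> E"
  using assms unfolding oriented_matroid_def signed_subset_def by auto

lemma oriented_matroid_finite_supp:
  assumes "oriented_matroid E C" "X \<in> C"
  shows "finite (supp X)"
proof -
  have "finite E" using assms(1) unfolding oriented_matroid_def by simp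
  then show ?thesis using oriented_matroid_signed_subset(2)[OF assms] by (rule finite_subset[rotated])
qed

lemma oriented_matroid_supp_nonempty:
  assumes "oriented_matroid E C" "X \<in> C"
  shows "supp X \<noteq> {}"
proof
  assume "supp X = {}"
  then have "X = ({}, {})" unfolding supp_def by (cases X) simp
  moreover have "({}, {}) \<notin> C" using assms(1) unfolding oriented_matroid_def by blast
  ultimately show False using assms(2) by simp
qed

lemma oriented_matroid_sneg:
  "oriented_matroid E C \<Longrightarrow> X \<in> C \<Longrightarrow> sneg X \<in> C"
  unfolding oriented_matroid_def by blast

lemma oriented_matroid_elim:
  assumes "oriented_matroid E C" "X \<in> C" "Y \<in> C" "X \<noteq> Y" "X \<noteq> sneg Y"
    "e \<in> fst X" "e \<in> snd Y"
  obtains Z where "Z \<in> C" "fst Z \<subseteq> fst X \<union> fst Y - {e}" "snd Z \<subseteq> snd X \<union> snd Y - {e}"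
proof -
  have "\<forall>X\<in>C. \<forall>Y\<in>C. \<forall>e. X \<noteq> Y \<and> X \<noteq> sneg Y \<and> e \<in> fst X \<inter> snd Y \<longrightarrow>
        (\<exists>Z\<in>C. fst Z \<subseteq> fst X \<union> fst Y - {e} \<and> snd Z \<subseteq> snd X \<union> snd Y - {e})"
    using assms(1) unfolding oriented_matroid_def by (elim conjE)
  then show ?thesis
    using assms(2-) that by (meson IntI)
qed

lemma oriented_matroid_supp_subset:
  "oriented_matroid E C \<Longrightarrow> X \<in> C \<Longrightarrow> Y \<in> C \<Longrightarrow> supp X \<subseteq> supp Y \<Longrightarrow> X = Y \<or> X = sneg Y"
  unfolding oriented_matroid_def by blast

lemma sneg_sneg [simp]: "sneg (sneg X) = X"
  unfolding sneg_def by simp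

lemma supp_sneg [simp]: "supp (sneg X) = supp X"
  unfolding supp_def sneg_def by auto

lemma fst_reorient_set [simp]: "fst (reorient_set A X) = fst X - A \<union> snd X \<inter> A"
  and snd_reorient_set [simp]: "snd (reorient_set A X) = snd X - A \<union> fst X \<inter> A"
  unfolding reorient_set_def by simp_all

lemma supp_reorient_set [simp]: "supp (reorient_set A X) = supp X"
  unfolding supp_def by auto

lemma reorient_set_sneg: "reorient_set A (sneg X) = sneg (reorient_set A X)"
  unfolding sneg_def by (rule prod_eqI) auto

lemma reorient_set_cong:
  "supp X \<inter> A = supp X \<inter> B \<Longrightarrow> reorient_set A X = reorient_set B X"
  unfolding supp_def by (rule prod_eqI) auto

lemma reorient_insert:
  "e \<notin> A \<Longrightarrow> reorient {e} (reorient A C) = reorient (insert e A) C"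
  unfolding reorient_def image_comp by (rule image_cong) (auto intro: prod_eqI)

lemma oriented_matroid_reorient:
  assumes om: "oriented_matroid E C"
  shows "oriented_matroid E (reorient A C)"
proof -
  let ?r = "reorient_set A"
  have sign: "signed_subset E (?r X)" if "X \<in> C" for X
    using oriented_matroid_signed_subset[OF om that] unfolding signed_subset_def by auto
  have nonempty: "?r X \<noteq> ({}, {})" if "X \<in> C" for X
  proof
    assume "?r X = ({}, {})"
    then have "supp (?r X) = supp ({}, {})" by (rule arg_cong)
    then show False using oriented_matroid_supp_nonempty[OF om that] by (auto simp: supp_def)
  qed
  have neg: "sneg (?r X) \<in> reorient A C" if "X \<in> C" for X
    using oriented_matroid_sneg[OF om that] unfolding reorient_def reorient_set_sneg[symmetric] by blast
  have incomparable: "?r X = ?r Y \<or> ?r X = sneg (?r Y)"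
    if "X \<in> C" "Y \<in> C" "supp X \<subseteq> supp Y" for X Y
    using oriented_matroid_supp_subset[OF om that] by (auto simp: reorient_set_sneg)
  have elim: "\<exists>Z\<in>reorient A C. fst Z \<subseteq> fst (?r X) \<union> fst (?r Y) - {e} \<and>
                                snd Z \<subseteq> snd (?r X) \<union> snd (?r Y) - {e}"
    if XY: "X \<in> C" "Y \<in> C" and neq: "?r X \<noteq> ?r Y" "?r X \<noteq> sneg (?r Y)"
      and e: "e \<in> fst (?r X) \<inter> snd (?r Y)"
    for X Y e
  proof -
    have "X \<noteq> Y" "X \<noteq> sneg Y" "Y \<noteq> X" "Y \<noteq> sneg X"
      using neq by (auto simp: reorient_set_sneg)
    then obtain Z where "Z \<in> C" "fst Z \<subseteq> fst X \<union> fst Y - {e}" "snd Z \<subseteq> snd X \<union> snd Y - {e}"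
    proof (cases "e \<in> A")
      case True
      then have "e \<in> fst Y" "e \<in> snd X" using e by auto
      with oriented_matroid_elim[OF om XY(2,1) \<open>Y \<noteq> X\<close> \<open>Y \<noteq> sneg X\<close>] that show ?thesis
        by (metis Un_commute)
    next
      case False
      then have "e \<in> fst X" "e \<in> snd Y" using e by auto
      with oriented_matroid_elim[OF om XY \<open>X \<noteq> Y\<close> \<open>X \<noteq> sneg Y\<close>] that show ?thesis
        by blast
    qed
    then show ?thesis unfolding reorient_def by (intro bexI[of _ "?r Z"]) auto
  qed
  show ?thesis
    unfolding oriented_matroid_def
  proof (intro conjI)
    show "finite E" using om unfolding oriented_matroid_def by blast
    show "\<forall>X\<in>reorient A C. signed_subset E X" using sign unfolding reorient_def by blast
    show "({}, {}) \<notin> reorient A C" unfolding reorient_def by (metis image_iff nonempty)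
    show "\<forall>X\<in>reorient A C. sneg X \<in> reorient A C" using neg unfolding reorient_def by blast
    show "\<forall>X\<in>reorient A C. \<forall>Y\<in>reorient A C. supp X \<subseteq> supp Y \<longrightarrow> X = Y \<or> X = sneg Y"
      using incomparable unfolding reorient_def by auto
    show "\<forall>X\<in>reorient A C. \<forall>Y\<in>reorient A C. \<forall>e. X \<noteq> Y \<and> X \<noteq> sneg Y \<and> e \<in> fst X \<inter> snd Y \<longrightarrow>
        (\<exists>Z\<in>reorient A C. fst Z \<subseteq> fst X \<union> fst Y - {e} \<and> snd Z \<subseteq> snd X \<union> snd Y - {e})"
      using elim unfolding reorient_def by blast
  qed
qed

lemma reorient_deletion: "reorient A (deletion E C D) = deletion E (reorient A C) D"
  unfolding reorient_def deletion_def by auto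

lemma reorient_set_restrict:
  "reorient_set A (fst X - N, snd X - N) = (fst (reorient_set A X) - N, snd (reorient_set A X) - N)"
  by (rule prod_eqI) auto

lemma reorient_contraction: "reorient A (contraction C N) = contraction (reorient A C) N"
proof -
  define S where "S C' = (\<lambda>Y. (fst Y - N, snd Y - N)) ` {Y \<in> C'. supp Y - N \<noteq> {}}" for C'
  have S: "S (reorient A C) = reorient_set A ` S C"
    unfolding S_def reorient_def Compr_image_eq image_image reorient_set_restrict by simp
  have contraction_S: "contraction C' N = {Z \<in> S C'. \<not> (\<exists>Z'\<in>S C'. supp Z' \<subset> supp Z)}" for C'
    unfolding contraction_def S_def Let_def setcompr_eq_image by simp
  show ?thesis
    unfolding contraction_S S Compr_image_eq by (simp add: reorient_def contraction_S)
qed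

lemma shrink_positive_circuit:
  assumes om: "oriented_matroid E C" and Y: "Y \<in> C" "snd Y \<subseteq> N"
    and W: "W \<in> C" "supp W - N \<subset> supp Y - N"
  shows "\<exists>Y'\<in>C. snd Y' \<subseteq> N \<and> supp Y' \<subseteq> supp Y \<union> supp W \<and> supp Y' - N \<subset> supp Y - N"
  using W
proof (induction "card (snd W - N)" arbitrary: W rule: less_induct)
  case less
  show ?case
  proof (cases "snd W \<subseteq> N")
    case True
    then show ?thesis using less.prems by blast
  next
    case False
    then obtain f where f: "f \<in> snd W" "f \<notin> N" by blast
    then have fY: "f \<in> supp Y - N" using less.prems(2) unfolding supp_def by blast
    then have "f \<in> fst Y" using Y(2) unfolding supp_def by blast
    have "Y \<noteq> W" "Y \<noteq> sneg W"
      using less.prems(2) by (metis less_irrefl supp_sneg)+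
    \<comment> \<open>f is positive in Y and negative in W; eliminating it shrinks the negative part outside N\<close>
    then obtain Z where Z: "Z \<in> C" "fst Z \<subseteq> fst Y \<union> fst W - {f}" "snd Z \<subseteq> snd Y \<union> snd W - {f}"
      by (rule oriented_matroid_elim[OF om Y(1) less.prems(1) _ _ \<open>f \<in> fst Y\<close> f(1)])
    have supp_Z: "supp Z \<subseteq> supp Y \<union> supp W - {f}"
      using Z unfolding supp_def by blast
    then have "supp Z - N \<subset> supp Y - N"
      using less.prems(2) fY by blast
    moreover have "card (snd Z - N) < card (snd W - N)"
    proof (rule psubset_card_mono)
      show "finite (snd W - N)"
        using oriented_matroid_finite_supp[OF om less.prems(1)] unfolding supp_def by simp
      show "snd Z - N \<subset> snd W - N"
        using Z(3) Y(2) f by blast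
    qed
    ultimately obtain Y' where "Y' \<in> C" "snd Y' \<subseteq> N" "supp Y' \<subseteq> supp Y \<union> supp Z" "supp Y' - N \<subset> supp Y - N"
      using less.hyps Z(1) by blast
    then show ?thesis using supp_Z by blast
  qed
qed

lemma acyclic_contraction_deletion_iff:
  assumes om: "oriented_matroid E C" and indep: "\<forall>Y\<in>C. \<not> supp Y \<subseteq> N"
  shows "acyclic_om (contraction (deletion E C D) N) \<longleftrightarrow> (\<forall>Y\<in>C. supp Y \<inter> D = {} \<longrightarrow> \<not> snd Y \<subseteq> N)"
proof
  assume acyclic: "acyclic_om (contraction (deletion E C D) N)"
  define S where "S = {(fst Y - N, snd Y - N) | Y. Y \<in> deletion E C D \<and> supp Y - N \<noteq> {}}"
  have False if "Y \<in> C" "supp Y \<inter> D = {}" "snd Y \<subseteq> N" for Y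
    using that
  proof (induction "card (supp Y - N)" arbitrary: Y rule: less_induct)
    case less
    let ?Z = "(fst Y - N, snd Y - N)"
    have "supp Y \<subseteq> E - D"
      using less.prems oriented_matroid_signed_subset(2)[OF om] by blast
    then have "?Z \<in> S"
      unfolding S_def deletion_def using less.prems(1) indep by blast
    moreover have "?Z \<notin> contraction (deletion E C D) N"
      using acyclic less.prems(3) unfolding acyclic_om_def by force
    ultimately obtain Z' where "Z' \<in> S" "supp Z' \<subset> supp ?Z"
      unfolding contraction_def Let_def S_def by blast
    then obtain W where "W \<in> deletion E C D" "Z' = (fst W - N, snd W - N)"
      unfolding S_def by blast
    moreover have "supp ?Z = supp Y - N" "supp Z' = supp W - N"
      unfolding supp_def \<open>Z' = (fst W - N, snd W - N)\<close> by auto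
    ultimately have W: "W \<in> C" "supp W \<inter> D = {}" "supp W - N \<subset> supp Y - N"
      using \<open>supp Z' \<subset> supp ?Z\<close> unfolding deletion_def by auto
    then obtain Y' where Y': "Y' \<in> C" "snd Y' \<subseteq> N" "supp Y' \<subseteq> supp Y \<union> supp W"
        "supp Y' - N \<subset> supp Y - N"
      using shrink_positive_circuit[OF om less.prems(1,3)] by blast
    have "finite (supp Y - N)"
      using oriented_matroid_finite_supp[OF om less.prems(1)] by simp
    then have "card (supp Y' - N) < card (supp Y - N)"
      using Y'(4) by (rule psubset_card_mono)
    then show False
      using less.hyps Y' W(2) less.prems(2) by blast
  qed
  then show "\<forall>Y\<in>C. supp Y \<inter> D = {} \<longrightarrow> \<not> snd Y \<subseteq> N" by blast
next
  assume no_positive: "\<forall>Y\<in>C. supp Y \<inter> D = {} \<longrightarrow> \<not> snd Y \<subseteq> N"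
  show "acyclic_om (contraction (deletion E C D) N)"
    unfolding acyclic_om_def
  proof
    assume "\<exists>Z\<in>contraction (deletion E C D) N. snd Z = {}"
    then obtain Z where "Z \<in> contraction (deletion E C D) N" "snd Z = {}" by blast
    then obtain Y where "Y \<in> C" "supp Y \<subseteq> E - D" "Z = (fst Y - N, snd Y - N)"
      unfolding contraction_def Let_def deletion_def by blast
    then show False
      using no_positive \<open>snd Z = {}\<close> by auto
  qed
qed

lemma acyclic_reorient_minor_iff:
  assumes om: "oriented_matroid E C" and indep: "\<forall>Y\<in>C. \<not> supp Y \<subseteq> N"
  shows "acyclic_om (reorient A (contraction (deletion E C D) N)) \<longleftrightarrow>
    (\<forall>Y\<in>C. supp Y \<inter> D = {} \<longrightarrow> \<not> snd (reorient_set A Y) \<subseteq> N)"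
proof -
  have "\<forall>Y\<in>reorient A C. \<not> supp Y \<subseteq> N"
    using indep unfolding reorient_def by simp
  from acyclic_contraction_deletion_iff[OF oriented_matroid_reorient[OF om] this]
  show ?thesis
    unfolding reorient_contraction reorient_deletion by (simp add: reorient_def)
qed

lemma acyclic_reorient_minor_mono:
  assumes om: "oriented_matroid E C" and indep: "\<forall>Y\<in>C. \<not> supp Y \<subseteq> N"
    and acyclic: "acyclic_om (reorient A (contraction (deletion E C D) N))"
    and "D \<subseteq> D'" "A - D' = A' - D'"
  shows "acyclic_om (reorient A' (contraction (deletion E C D') N))"
  unfolding acyclic_reorient_minor_iff[OF om indep]
proof (intro ballI impI)
  fix Y assume Y: "Y \<in> C" "supp Y \<inter> D' = {}"
  then have "\<not> snd (reorient_set A Y) \<subseteq> N"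
    using acyclic \<open>D \<subseteq> D'\<close> unfolding acyclic_reorient_minor_iff[OF om indep] by blast
  moreover have "reorient_set A' Y = reorient_set A Y"
    using Y(2) assms(5) by (intro reorient_set_cong) blast
  ultimately show "\<not> snd (reorient_set A' Y) \<subseteq> N" by simp
qed

lemma snd_reorient_set_subset_insert:
  assumes "e \<notin> A" "fst Y \<inter> snd Y = {}" "snd (reorient_set A Y) \<subseteq> insert e N"
  shows "snd (reorient_set A Y) \<subseteq> N \<or> snd (reorient_set (insert e A) Y) \<subseteq> N"
  using assms by auto

lemma NBC_not_supp_subset:
  assumes om: "oriented_matroid (set es) C" and "N \<in> NBC es C" "Y \<in> C"
  shows "\<not> supp Y \<subseteq> N"
proof
  assume "supp Y \<subseteq> N"
  have "supp Y \<noteq> {}"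
    using oriented_matroid_supp_nonempty[OF om \<open>Y \<in> C\<close>] .
  moreover have "finite (supp Y)"
    using oriented_matroid_finite_supp[OF om \<open>Y \<in> C\<close>] .
  ultimately have "Max (pos es ` supp Y) \<in> pos es ` supp Y"
    by simp
  then obtain m where m: "m \<in> supp Y" "pos es m = Max (pos es ` supp Y)"
    by (metis imageE)
  then have "\<forall>x\<in>supp Y. pos es x \<le> pos es m"
    using \<open>finite (supp Y)\<close> by simp
  then have "broken_circuit es C (supp Y - {m})"
    unfolding broken_circuit_def circuits_def using \<open>Y \<in> C\<close> m(1) \<open>\<forall>x\<in>supp Y. pos es x \<le> pos es m\<close> by blast
  then show False
    using \<open>N \<in> NBC es C\<close> \<open>supp Y \<subseteq> N\<close> unfolding NBC_def by blast
qed

lemma pos_nth: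
  assumes "distinct es" "i < length es"
  shows "pos es (es ! i) = i"
  unfolding pos_def
proof (rule Least_equality)
  show "i < length es \<and> es ! i = es ! i" using assms(2) by simp
next
  fix i' assume "i' < length es \<and> es ! i' = es ! i"
  then show "i \<le> i'" using assms nth_eq_iff_index_eq by fastforce
qed

lemma nth_pos:
  assumes "x \<in> set es"
  shows "es ! pos es x = x"
proof -
  obtain i where "i < length es" "es ! i = x"
    using assms by (auto simp: in_set_conv_nth)
  then show ?thesis
    unfolding pos_def by (metis (mono_tags, lifting) LeastI)
qed

lemma inj_on_pos: "inj_on (pos es) (set es)"
  by (metis inj_onI nth_pos)

lemma pos_less_of_mem_Ek:
  assumes "distinct es" "x \<in> Ek es j"
  shows "pos es x < j"
proof -
  obtain i where "i < length (take j es)" "take j es ! i = x"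
    using assms(2) unfolding Ek_def by (auto simp: in_set_conv_nth)
  then show ?thesis
    using pos_nth[OF assms(1)] by auto
qed

lemma Ek_Suc:
  assumes "j < length es"
  shows "Ek es (Suc j) = insert (es ! j) (Ek es j)"
  unfolding Ek_def take_Suc_conv_app_nth[OF assms] by simp

lemma nth_notin_Ek:
  assumes "distinct es" "j < length es"
  shows "es ! j \<notin> Ek es j"
  using pos_less_of_mem_Ek[OF assms(1)] pos_nth[OF assms] by (metis less_irrefl)

lemma oriented_matroid_pick_sign:
  assumes om: "oriented_matroid E C" and "Y \<in> C"
  obtains Y' where "Y' \<in> C" "supp Y' = supp Y" "m \<notin> snd (reorient_set A Y')"
proof (cases "m \<in> snd (reorient_set A Y)")
  case True
  have "fst Y \<inter> snd Y = {}"
    using oriented_matroid_signed_subset(1)[OF om \<open>Y \<in> C\<close>] .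
  then have "fst (reorient_set A Y) \<inter> snd (reorient_set A Y) = {}"
    by auto
  moreover have "snd (reorient_set A (sneg Y)) = fst (reorient_set A Y)"
    by (simp add: reorient_set_sneg sneg_def)
  ultimately have "m \<notin> snd (reorient_set A (sneg Y))"
    using True by blast
  then show ?thesis
    by (rule that[OF oriented_matroid_sneg[OF om \<open>Y \<in> C\<close>] supp_sneg])
next
  case False
  then show ?thesis
    by (rule that[OF \<open>Y \<in> C\<close> refl])
qed

lemma insert_in_NBC:
  assumes om: "oriented_matroid (set es) C" and N: "N \<in> NBC es C" and e: "e \<in> set es"
    and D: "D \<inter> N = {}" "\<forall>x\<in>D. pos es x < pos es e"
    and no_positive: "\<forall>Y\<in>C. supp Y \<inter> D = {} \<longrightarrow> \<not> snd (reorient_set A Y) \<subseteq> insert e N"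
  shows "insert e N \<in> NBC es C"
  unfolding NBC_def
proof (intro CollectI conjI notI)
  show "insert e N \<subseteq> set es"
    using N e unfolding NBC_def by blast
next
  assume "\<exists>B. broken_circuit es C B \<and> B \<subseteq> insert e N"
  then obtain c m where "c \<in> supp ` C" "m \<in> c" "\<forall>x\<in>c. pos es x \<le> pos es m" "c - {m} \<subseteq> insert e N"
    unfolding broken_circuit_def circuits_def by blast
  then obtain Y where Y: "Y \<in> C" "m \<in> supp Y" "\<forall>x\<in>supp Y. pos es x \<le> pos es m"
      "supp Y - {m} \<subseteq> insert e N"
    by blast
  have e_Y: "e \<in> supp Y - {m}"
  proof (rule ccontr)
    assume "e \<notin> supp Y - {m}"
    then have "supp Y - {m} \<subseteq> N"
      using Y(4) by blast
    moreover have "broken_circuit es C (supp Y - {m})"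
      unfolding broken_circuit_def circuits_def using Y(1-3) by blast
    ultimately show False
      using N unfolding NBC_def by blast
  qed
  have "m \<in> set es"
    using oriented_matroid_signed_subset(2)[OF om Y(1)] Y(2) by blast
  then have "pos es e \<noteq> pos es m"
    using e e_Y inj_on_pos[of es] by (metis DiffE inj_on_eq_iff singletonI)
  then have "pos es e < pos es m"
    using Y(3) e_Y by fastforce
  then have "e \<notin> D" "m \<notin> D"
    using D(2) by auto
  then have avoid_D: "supp Y \<inter> D = {}"
    using Y(4) D(1) by blast
  obtain Y' where Y': "Y' \<in> C" "supp Y' = supp Y" "m \<notin> snd (reorient_set A Y')"
    using oriented_matroid_pick_sign[OF om Y(1)] .
  have "snd (reorient_set A Y') \<subseteq> supp (reorient_set A Y') - {m}"
    using Y'(3) unfolding supp_def by blast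
  also have "\<dots> \<subseteq> insert e N"
    using Y'(2) Y(4) by simp
  finally show False
    using no_positive Y'(1,2) avoid_D by metis
qed

lemma acyclic_Mk_Suc:
  assumes "distinct es" and om: "oriented_matroid (set es) C" and "j < length es"
    and N: "N \<in> NBC es C" "N \<subseteq> Ek es j"
    and acyclic: "acyclic_om (Mk es C j N A)"
    and "A' - {es ! j} = A - {es ! j}"
  shows "acyclic_om (Mk es C (Suc j) N A')"
proof -
  have "Ek es (Suc j) - N = insert (es ! j) (Ek es j - N)"
    using Ek_Suc[OF assms(3)] nth_notin_Ek[OF assms(1,3)] N(2) by blast
  moreover have "A - insert (es ! j) (Ek es j - N) = A' - insert (es ! j) (Ek es j - N)"
    using assms(7) by blast
  ultimately show ?thesis
    unfolding Mk_def
    using acyclic_reorient_minor_mono[OF om _ acyclic[unfolded Mk_def], of "insert (es ! j) (Ek es j - N)" A']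
      NBC_not_supp_subset[OF om N(1)] by auto
qed

lemma insert_NBC_and_acyclic_Mk_Suc:
  assumes "distinct es" and om: "oriented_matroid (set es) C" and j: "j < length es"
    and N: "N \<in> NBC es C" "N \<subseteq> Ek es j" and "es ! j \<notin> A"
    and acyclic: "acyclic_om (Mk es C j N A)"
    and acyclic_flip: "acyclic_om (reorient {es ! j} (Mk es C j N A))"
  shows "insert (es ! j) N \<in> NBC es C \<and> acyclic_om (Mk es C (Suc j) (insert (es ! j) N) A)"
proof -
  let ?e = "es ! j"
  let ?D = "Ek es j - N"
  have indep: "\<forall>Y\<in>C. \<not> supp Y \<subseteq> N"
    using NBC_not_supp_subset[OF om N(1)] by blast
  have "\<forall>Y\<in>C. supp Y \<inter> ?D = {} \<longrightarrow> \<not> snd (reorient_set A Y) \<subseteq> N"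
    using acyclic unfolding Mk_def acyclic_reorient_minor_iff[OF om indep] .
  moreover have "\<forall>Y\<in>C. supp Y \<inter> ?D = {} \<longrightarrow> \<not> snd (reorient_set (insert ?e A) Y) \<subseteq> N"
    using acyclic_flip unfolding Mk_def reorient_insert[OF \<open>?e \<notin> A\<close>] acyclic_reorient_minor_iff[OF om indep] .
  ultimately have no_positive: "\<forall>Y\<in>C. supp Y \<inter> ?D = {} \<longrightarrow> \<not> snd (reorient_set A Y) \<subseteq> insert ?e N"
    using snd_reorient_set_subset_insert[OF \<open>?e \<notin> A\<close>] oriented_matroid_signed_subset(1)[OF om] by blast
  have "\<forall>x\<in>?D. pos es x < pos es ?e"
    using pos_less_of_mem_Ek[OF assms(1)] pos_nth[OF assms(1) j] by auto
  then have NBC: "insert ?e N \<in> NBC es C"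
    using insert_in_NBC[OF om N(1) _ _ _ no_positive] j by auto
  moreover have "Ek es (Suc j) - insert ?e N = ?D"
    using Ek_Suc[OF j] nth_notin_Ek[OF assms(1) j] by blast
  ultimately show ?thesis
    using no_positive acyclic_reorient_minor_iff[OF om ballI[OF NBC_not_supp_subset[OF om NBC]]]
    unfolding Mk_def by auto
qed

theorem lemma2p3:
  fixes es :: "'a list" and C :: "'a sset set" and k :: nat and N A :: "'a set"
  assumes "distinct es"
    and "oriented_matroid (set es) C"
    and "loopless C"
    and "1 \<le> k" and "k \<le> length es"
    and "(N, A) \<in> Nscr es C (k - 1)"
  shows "psi es C k (N, A) \<in> Nscr es C k"
proof -
  \<comment> \<open>\<open>loopless C\<close> is unused: a loop has the empty broken circuit, so NBC would be empty\<close>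
  obtain j where k: "k = Suc j" and j: "j < length es"
    using assms(4,5) by (metis Suc_le_eq Suc_pred less_le_trans zero_less_one)
  from assms(6) have N: "N \<in> NBC es C" "N \<subseteq> Ek es j" and A: "A \<subseteq> set es - Ek es j"
    and acyclic: "acyclic_om (Mk es C j N A)"
    unfolding Nscr_def k by auto
  have Ek: "Ek es k = insert (es ! j) (Ek es j)"
    unfolding k using Ek_Suc[OF j] .
  consider (flip_back) "es ! j \<in> A"
    | (keep) "es ! j \<notin> A" "\<not> acyclic_om (reorient {es ! j} (Mk es C j N A))"
    | (extend) "es ! j \<notin> A" "acyclic_om (reorient {es ! j} (Mk es C j N A))"
    by blast
  then show ?thesis
  proof cases
    case flip_back
    then show ?thesis
      using acyclic_Mk_Suc[OF assms(1,2) j N acyclic, of "A - {es ! j}"] N A Ek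
      unfolding psi_def Nscr_def k by auto
  next
    case keep
    then show ?thesis
      using acyclic_Mk_Suc[OF assms(1,2) j N acyclic, of A] N A Ek
      unfolding psi_def Nscr_def k by auto
  next
    case extend
    then show ?thesis
      using insert_NBC_and_acyclic_Mk_Suc[OF assms(1,2) j N extend(1) acyclic extend(2)] N A Ek
      unfolding psi_def Nscr_def k by auto
  qed
qed

end
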